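(* Under the setting and assumptions below (those of the asymptotic risk theorem), with $\alpha_g>0$ for all $g$, the asymptotically optimal choice of regularization parameters is $\lambda_g^*=\gamma_g/\alpha_g^2$, $g=1,\dots,K$; that is, the almost-sure limit $\mathcal R(\boldsymbol\lambda)=1+\gamma f(\boldsymbol\lambda)+\sum_{j}\frac{\gamma}{\gamma_j}(\gamma_j\lambda_j-\alpha_j^2\lambda_j^2)\partial_{\lambda_j}f(\boldsymbol\lambda)$ of the risk $\mathbf R(\boldsymbol\lambda)$ is minimized over $\boldsymbol\lambda\in(0,\infty)^K$ at $\boldsymbol\lambda^*=(\lambda_1^*,\dots,\lambda_K^* )$, and the optimal limiting risk is $1+\gamma f(\lambda_1^*,\dots,\lambda_K^* )$.
   Context: Setting: sequence of problems with $n\to\infty$, $p=p(n)$ features in $K$ consecutive disjoint groups $\mathcal G_g$, $p_g=|\mathcal G_g|$. Model: independently, $w_j$ mean $0$, variance $\alpha_g^2/p_g$ for $j\in\mathcal G_g$; $x_i\sim\mathcal N(0,\boldsymbol\Sigma)$ i.i.d.; $\varepsilon_i$ mean $0$, variance $1$; $Y_i=x_i^\top\mathbf w+\varepsilon_i$. For deterministic $\boldsymbol\lambda\in(0,\infty)^K$, $\widehat{\mathbf w}(\boldsymbol\lambda)=(\mathbf X^\top\mathbf X/n+\boldsymbol\Lambda)^{-1}\mathbf X^\top\mathbf Y/n$ with $\boldsymbol\Lambda$ diagonal, entry $\lambda_g$ at $j\in\mathcal G_g$; $\mathbf R(\boldsymbol\lambda)=\mathbb E[(Y_{\mathrm{test}}-x_{\mathrm{test}}^\top\widehat{\mathbf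 w}(\boldsymbol\lambda))^2\mid\mathbf X,\mathbf Y,\mathbf w]$ for an independent fresh draw. Assumptions: $K$ fixed and $p_g/n\to\gamma_g>0$, $\gamma=\sum_g\gamma_g$; eigenvalues of $\boldsymbol\Sigma$ in $[h_1,h_2]$, fixed $h_1,h_2>0$; $(4+\eta)$-th moments of $\sqrt p\,w_j$ and $\varepsilon_i$ uniformly bounded for some $\eta>0$; each group covariance $\boldsymbol\Sigma_g$ has limiting spectral distribution $H_g$; and there are symmetric positive definite $\tilde{\boldsymbol\Sigma}_g$ ($p_g\times p_g$, eigenvalues in $[h_1,h_2]$) with $\mathrm{Rank}(\boldsymbol\Sigma^{1/2}-\mathrm{diag}(\tilde{\boldsymbol\Sigma}_1^{1/2},\dots,\tilde{\boldsymbol\Sigma}_K^{1/2}))\le r$ for fixed $r$. Here $f(\boldsymbol\lambda)\ge0$ is the unique nonnegative solution of $f=\sum_{j}\frac{\gamma_j}{\gamma}\int(\frac{\lambda_j}{t}+\frac{1}{1+\gamma f})^{-1}dH_j(t)$; under these assumptions $\mathbf R(\boldsymbol\lambda)\to\mathcal R(\boldsymbol\lambda)$ almost surely. *)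

theory Defs
  imports "HOL-Probability.Probability"
begin

text \<open>Groups are indexed by 0..<K. gam g = gamma_g, alpha g = alpha_g, H g = limiting
spectral distribution of group g, lam g = lambda_g.\<close>

definition gamma_tot :: "nat \<Rightarrow> (nat \<Rightarrow> real) \<Rightarrow> real" where
  "gamma_tot K gam = (\<Sum>g<K. gam g)"

definition fsol :: "nat \<Rightarrow> (nat \<Rightarrow> real) \<Rightarrow> (nat \<Rightarrow> real measure) \<Rightarrow> (nat \<Rightarrow> real) \<Rightarrow> real" where
  "fsol K gam H lam = (THE x. 0 \<le> x \<and>
     x = (\<Sum>j<K. gam j / gamma_tot K gam *
            (\<integral>t. inverse (lam j / t + 1 / (1 + gamma_tot K gam * x)) \<partial>(H j))))"

definition Rlim :: "nat \<Rightarrow> (nat \<Rightarrow> real) \<Rightarrow> (nat \<Rightarrow> real) \<Rightarrow> (nat \<Rightarrow> real measure) \<Rightarrow> (nat \<Rightarrow> real) \<Rightarrow> real" where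
  "Rlim K gam alpha H lam = 1 + gamma_tot K gam * fsol K gam H lam
     + (\<Sum>j<K. gamma_tot K gam / gam j * (gam j * lam j - (alpha j)^2 * (lam j)^2)
                * deriv (\<lambda>s. fsol K gam H (lam(j := s))) (lam j))"

end

theory Submission
  imports Defs
begin

(*
  Write c = 1 / (1 + gamma f(lambda)), a number in (0, 1].  The fixed-point equation for f
  becomes 1 - c = sum_g gamma_g int c t / (lambda_g + c t) dH_g, whose right-hand side
  increases in c, so c is well defined.  An exact difference identity for c under a change of
  lambda_j gives the partial derivatives of f, and substituting them the limiting risk becomes
  R(lambda) = (1 + sum_j alpha_j^2 lambda_j^2 A_j) / (c E), where A_j = int t / (lambda_j + c t)^2 dH_j
  and E = 1 + sum_j gamma_j lambda_j A_j.  A pointwise Cauchy-Schwarz inequality in t then gives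
  R >= 1 + R N(R) with N(r) = sum_j int alpha_j^2 gamma_j t / (alpha_j^2 t + r gamma_j) dH_j,
  which is decreasing in r.  At lambda_opt the correction terms of R vanish and the inequality
  is an equality, R_opt = 1 + R_opt N(R_opt); together these force R_opt <= R(lambda).
*)

section \<open>Elementary estimates\<close>

lemma dof_term_diff_le:
  fixes t l c c' h :: real
  assumes "0 < t" "t \<le> h" "0 < l" "0 \<le> c" "0 \<le> c'"
  shows "\<bar>c*t / (l + c*t) - c'*t / (l + c'*t)\<bar> \<le> h / l * \<bar>c - c'\<bar>"
proof -
  have pos: "0 < l + c*t" "0 < l + c'*t" using assms by (auto intro: add_pos_nonneg)
  have "c*t / (l + c*t) - c'*t / (l + c'*t) = l*t*(c - c') / ((l + c*t) * (l + c'*t))"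
    using pos by (simp add: field_simps)
  then have "\<bar>c*t / (l + c*t) - c'*t / (l + c'*t)\<bar> = l*t*\<bar>c - c'\<bar> / ((l + c*t) * (l + c'*t))"
    using pos assms by (simp add: abs_mult)
  also have "\<dots> \<le> l*t*\<bar>c - c'\<bar> / (l*l)"
    using pos assms by (intro frac_le mult_mono) auto
  also have "\<dots> \<le> h / l * \<bar>c - c'\<bar>"
    using assms by (simp add: field_simps mult_right_mono)
  finally show ?thesis .
qed

lemma dof_term_mono:
  fixes t l c c' :: real
  assumes "0 < t" "0 < l" "0 \<le> c" "c \<le> c'"
  shows "c*t / (l + c*t) \<le> c'*t / (l + c'*t)"
proof -
  have pos: "0 < l + c*t" "0 < l + c'*t" using assms by (auto intro: add_pos_nonneg)
  have "c*t * (l + c'*t) \<le> c'*t * (l + c*t)"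
    using assms by (simp add: algebra_simps mult_right_mono)
  then show ?thesis using pos by (simp add: divide_simps)
qed

lemma cross_term_bounds:
  fixes t l c l' c' h :: real
  assumes "0 < t" "t \<le> h" "0 < l" "0 \<le> c" "0 < l'" "0 \<le> c'"
  shows "0 \<le> t / ((l' + c'*t) * (l + c*t)) \<and> t / ((l' + c'*t) * (l + c*t)) \<le> h / (l'*l)"
proof -
  have "l \<le> l + c*t" "l' \<le> l' + c'*t" using assms by auto
  then show ?thesis using assms by (auto intro!: frac_le mult_mono)
qed

lemma cross_term_diff_le:
  fixes t l c l' c' h :: real
  assumes "0 < t" "t \<le> h" "0 < l" "0 \<le> c" "0 < l'" "0 \<le> c'"
  shows "\<bar>t / ((l' + c'*t) * (l + c*t)) - t / ((l + c*t) * (l + c*t))\<bar>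
           \<le> h * (\<bar>l' - l\<bar> + h * \<bar>c' - c\<bar>) / (l'*l*l)"
proof -
  have pos: "l \<le> l + c*t" "l' \<le> l' + c'*t" using assms by auto
  have "t / ((l' + c'*t) * (l + c*t)) - t / ((l + c*t) * (l + c*t))
      = t * ((l - l') + (c - c')*t) / ((l' + c'*t) * (l + c*t) * (l + c*t))"
  proof -
    define A A' where "A = l + c*t" and "A' = l' + c'*t"
    have "A \<noteq> 0" "A' \<noteq> 0" using pos assms unfolding A_def A'_def by linarith+
    then have "t / (A' * A) - t / (A * A) = t * (A - A') / (A' * A * A)"
      by (simp add: field_simps)
    then show ?thesis unfolding A_def A'_def by (simp add: algebra_simps)
  qed
  moreover have "\<bar>t * ((l - l') + (c - c')*t)\<bar> \<le> h * (\<bar>l' - l\<bar> + h * \<bar>c' - c\<bar>)"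
  proof -
    have "\<bar>(l - l') + (c - c')*t\<bar> \<le> \<bar>l - l'\<bar> + \<bar>c - c'\<bar> * t"
      using abs_triangle_ineq[of "l - l'" "(c - c')*t"] assms by (simp add: abs_mult)
    also have "\<dots> \<le> \<bar>l' - l\<bar> + h * \<bar>c' - c\<bar>"
      using assms mult_left_mono[of t h "\<bar>c' - c\<bar>"] by (simp add: abs_minus_commute mult.commute)
    finally show ?thesis using assms by (auto simp: abs_mult intro!: mult_mono)
  qed
  moreover have "l'*l*l \<le> (l' + c'*t) * (l + c*t) * (l + c*t)"
    using pos assms by (intro mult_mono) auto
  ultimately show ?thesis
    using pos assms by (auto simp: abs_mult intro!: frac_le)
qed

lemma oracle_term_le:
  fixes t l c r b g :: real
  assumes "0 < t" "0 < l" "0 \<le> c" "0 < r" "0 < b" "0 < g"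
  shows "r * (b*g*t / (b*t + r*g))
           \<le> b*l\<^sup>2 * (t / ((l + c*t) * (l + c*t))) + r*g*c\<^sup>2 * (t / (l + c*t))\<^sup>2"
proof -
  define D where "D = l + c*t"
  have pos: "0 < D" "0 < b*t + r*g" using assms unfolding D_def by (auto intro: add_pos_nonneg)
  have "(b*t*(r*g)) * D\<^sup>2 \<le> (b*t*l\<^sup>2 + r*g*(c*t)\<^sup>2) * (b*t + r*g)"
  proof -
    have "(b*t*l\<^sup>2 + r*g*(c*t)\<^sup>2) * (b*t + r*g) - (b*t*(r*g)) * D\<^sup>2 = (b*t*l - r*g*(c*t))\<^sup>2"
      unfolding D_def by (simp add: power2_eq_square algebra_simps)
    then show ?thesis by (smt (verit) zero_le_power2)
  qed
  have "r * (b*g*t / (b*t + r*g)) = (b*t*(r*g)) / (b*t + r*g)"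
    by (simp add: mult_ac)
  also have "\<dots> \<le> (b*t*l\<^sup>2 + r*g*(c*t)\<^sup>2) / D\<^sup>2"
    using pos \<open>(b*t*(r*g)) * D\<^sup>2 \<le> _\<close> by (simp add: divide_simps)
  also have "\<dots> = b*l\<^sup>2 * (t / (D * D)) + r*g*c\<^sup>2 * (t / D)\<^sup>2"
    by (simp add: power2_eq_square add_divide_distrib mult_ac)
  finally show ?thesis unfolding D_def .
qed

lemma oracle_term_antimono:
  fixes t r r' b g :: real
  assumes "0 < t" "0 < r" "r \<le> r'" "0 < b" "0 < g"
  shows "b*g*t / (b*t + r'*g) \<le> b*g*t / (b*t + r*g)"
  using assms by (auto intro!: frac_le add_pos_pos mult_right_mono)

lemma sum_fun_upd_diff:
  fixes lam f :: "'a \<Rightarrow> real"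
  assumes "finite A" "j \<in> A"
  shows "(\<Sum>i\<in>A. ((lam(j := s)) i - lam i) * f i) = (s - lam j) * f j"
proof -
  have "(\<Sum>i\<in>A. ((lam(j := s)) i - lam i) * f i) = (\<Sum>i\<in>A. if i = j then (s - lam j) * f j else 0)"
    by (rule sum.cong) auto
  then show ?thesis using assms by simp
qed

lemma fun_upd_tendsto: "((\<lambda>s. (f(j := s)) i) \<longlongrightarrow> f i) (at (f j))"
  by (cases "i = j") auto

lemma eventually_pos_at: "0 < a \<Longrightarrow> \<forall>\<^sub>F s in at a. 0 < (s::real)"
  by (rule order_tendstoD(1)[OF tendsto_ident_at])

lemma le_of_fixed_point:
  fixes P :: "real \<Rightarrow> real"
  assumes antimono: "\<And>x y. 0 < x \<Longrightarrow> x \<le> y \<Longrightarrow> P y \<le> P x"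
    and r: "0 < r" "1 + r * P r \<le> r"
    and s: "0 < s" "s = 1 + s * P s"
  shows "s \<le> r"
proof (rule ccontr)
  assume "\<not> s \<le> r"
  then have "r * P s \<le> r * P r"
    using antimono[OF r(1)] r(1) by (simp add: mult_left_mono)
  then have "1 \<le> r * (1 - P s)"
    using r(2) by (simp add: algebra_simps)
  moreover have "s * (1 - P s) = 1"
    using s(2) by (simp add: algebra_simps)
  then have "0 < 1 - P s"
    using s(1) by (metis zero_less_mult_pos zero_less_one)
  ultimately have "s * (1 - P s) \<le> r * (1 - P s)"
    using \<open>s * (1 - P s) = 1\<close> by simp
  then show False
    using \<open>\<not> s \<le> r\<close> \<open>0 < 1 - P s\<close> by simp
qed

section \<open>Integrals against a spectral distribution on [h1, h2]\<close>

locale interval_prob =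
  fixes M :: "real measure" and h1 h2 :: real
  assumes prob: "prob_space M" and sets_M: "sets M = sets borel"
    and measure_interval: "measure M {h1..h2} = 1"
    and h1_pos: "0 < h1" and h1_le_h2: "h1 \<le> h2"
begin

lemma AE_interval: "AE t in M. t \<in> {h1..h2}"
  using prob_space.AE_prob_1[OF prob] measure_interval by blast

lemma pos_of_interval: "h1 \<le> t \<Longrightarrow> 0 < t"
  using h1_pos by auto

lemma denom_pos: "h1 \<le> t \<Longrightarrow> 0 < l \<Longrightarrow> 0 \<le> c \<Longrightarrow> 0 < l + c*t"
  using pos_of_interval[of t] by (intro add_pos_nonneg) auto

lemma borel_measurable_M: "f \<in> borel_measurable borel \<Longrightarrow> f \<in> borel_measurable M"
  using measurable_cong_sets[OF sets_M refl] by blast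

lemma integrable_continuous_on_interval:
  fixes f :: "real \<Rightarrow> real"
  assumes "f \<in> borel_measurable borel" "continuous_on {h1..h2} f"
  shows "integrable M f"
proof -
  interpret prob_space M by (rule prob)
  obtain B where B: "\<forall>t\<in>{h1..h2}. norm (f t) \<le> B"
    using compact_imp_bounded[OF compact_continuous_image[OF assms(2) compact_Icc]]
    by (auto simp: bounded_iff)
  have "AE t in M. norm (f t) \<le> B"
    using AE_interval by eventually_elim (use B in auto)
  then show ?thesis
    using borel_measurable_M[OF assms(1)] by (rule integrable_const_bound)
qed

lemma integral_mono_on_interval:
  fixes f g :: "real \<Rightarrow> real"
  assumes "integrable M f" "integrable M g" "\<And>t. t \<in> {h1..h2} \<Longrightarrow> f t \<le> g t"
  shows "integral\<^sup>L M f \<le> integral\<^sup>L M g"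
  using AE_interval assms(3) by (intro integral_mono_AE[OF assms(1,2)]) auto

lemma integral_cong_on_interval:
  fixes f g :: "real \<Rightarrow> real"
  assumes "f \<in> borel_measurable borel" "g \<in> borel_measurable borel"
    and "\<And>t. t \<in> {h1..h2} \<Longrightarrow> f t = g t"
  shows "integral\<^sup>L M f = integral\<^sup>L M g"
  using AE_interval assms(3) borel_measurable_M[OF assms(1)] borel_measurable_M[OF assms(2)]
  by (intro integral_cong_AE) auto

lemma integral_const_interval: "integral\<^sup>L M (\<lambda>t. c) = (c::real)"
  using prob_space.prob_space[OF prob] by simp

lemma integrable_const_interval: "integrable M (\<lambda>t. c::real)"
  using prob_space.finite_measure[OF prob] finite_measure.integrable_const by blast

lemma abs_integral_le_on_interval:
  fixes f :: "real \<Rightarrow> real"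
  assumes "integrable M f" "\<And>t. t \<in> {h1..h2} \<Longrightarrow> \<bar>f t\<bar> \<le> B"
  shows "\<bar>integral\<^sup>L M f\<bar> \<le> B"
proof -
  have "integral\<^sup>L M f \<le> integral\<^sup>L M (\<lambda>t. B)" "integral\<^sup>L M (\<lambda>t. -B) \<le> integral\<^sup>L M f"
    using assms(2) by (intro integral_mono_on_interval assms(1) integrable_const_interval; force)+
  then show ?thesis unfolding integral_const_interval by linarith
qed

end

definition ratio_int :: "real measure \<Rightarrow> real \<Rightarrow> real \<Rightarrow> real" where
  "ratio_int M l c = (\<integral>t. t / (l + c*t) \<partial>M)"

text \<open>\<open>dof_int M l c\<close> is the normalised degrees of freedom of ridge regression with penalty
  \<open>l / c\<close> and population spectrum \<open>M\<close>.\<close>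
definition dof_int :: "real measure \<Rightarrow> real \<Rightarrow> real \<Rightarrow> real" where
  "dof_int M l c = (\<integral>t. c*t / (l + c*t) \<partial>M)"

definition cross_int :: "real measure \<Rightarrow> real \<Rightarrow> real \<Rightarrow> real \<Rightarrow> real \<Rightarrow> real" where
  "cross_int M l' c' l c = (\<integral>t. t / ((l' + c'*t) * (l + c*t)) \<partial>M)"

definition square_int :: "real measure \<Rightarrow> real \<Rightarrow> real \<Rightarrow> real" where
  "square_int M l c = (\<integral>t. (t / (l + c*t))\<^sup>2 \<partial>M)"

definition oracle_int :: "real measure \<Rightarrow> real \<Rightarrow> real \<Rightarrow> real \<Rightarrow> real" where
  "oracle_int M b g r = (\<integral>t. b*g*t / (b*t + r*g) \<partial>M)"

lemma dof_int_eq_mult_ratio_int: "dof_int M l c = c * ratio_int M l c"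
  unfolding dof_int_def ratio_int_def
  by (simp add: integral_mult_right_zero[symmetric] times_divide_eq_right del: integral_mult_right_zero)

lemma dof_int_zero [simp]: "dof_int M l 0 = 0"
  unfolding dof_int_def by simp

context interval_prob
begin

lemma integrable_dof: "0 < l \<Longrightarrow> 0 \<le> c \<Longrightarrow> integrable M (\<lambda>t. c*t / (l + c*t))"
  by (intro integrable_continuous_on_interval continuous_intros)
     (auto simp: less_imp_neq[OF denom_pos, symmetric])

lemma integrable_cross:
  "0 < l \<Longrightarrow> 0 \<le> c \<Longrightarrow> 0 < l' \<Longrightarrow> 0 \<le> c' \<Longrightarrow> integrable M (\<lambda>t. t / ((l' + c'*t) * (l + c*t)))"
  by (intro integrable_continuous_on_interval continuous_intros)
     (auto simp: less_imp_neq[OF denom_pos, symmetric])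

lemma integrable_square: "0 < l \<Longrightarrow> 0 \<le> c \<Longrightarrow> integrable M (\<lambda>t. (t / (l + c*t))\<^sup>2)"
  by (intro integrable_continuous_on_interval continuous_intros)
     (auto simp: less_imp_neq[OF denom_pos, symmetric])

lemma integrable_oracle: "0 < b \<Longrightarrow> 0 < g \<Longrightarrow> 0 < r \<Longrightarrow> integrable M (\<lambda>t. b*g*t / (b*t + r*g))"
  by (intro integrable_continuous_on_interval continuous_intros)
     (auto dest!: pos_of_interval intro!: less_imp_neq[symmetric] add_pos_pos)

lemma dof_int_lipschitz:
  assumes "0 < l" "0 \<le> c" "0 \<le> c'"
  shows "\<bar>dof_int M l c - dof_int M l c'\<bar> \<le> h2 / l * \<bar>c - c'\<bar>"
proof -
  have "dof_int M l c - dof_int M l c' = (\<integral>t. c*t / (l + c*t) - c'*t / (l + c'*t) \<partial>M)"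
    unfolding dof_int_def using assms by (intro Bochner_Integration.integral_diff[symmetric] integrable_dof)
  also have "\<bar>\<dots>\<bar> \<le> h2 / l * \<bar>c - c'\<bar>"
    using assms by (intro abs_integral_le_on_interval Bochner_Integration.integrable_diff integrable_dof dof_term_diff_le)
                   (auto dest: pos_of_interval)
  finally show ?thesis .
qed

lemma dof_int_mono: "0 < l \<Longrightarrow> 0 \<le> c \<Longrightarrow> c \<le> c' \<Longrightarrow> dof_int M l c \<le> dof_int M l c'"
  unfolding dof_int_def
  by (intro integral_mono_on_interval integrable_dof dof_term_mono) (auto dest: pos_of_interval)

lemma dof_int_diff:
  assumes "0 < l" "0 \<le> c" "0 < l'" "0 \<le> c'"
  shows "dof_int M l' c' - dof_int M l c = (c'*l - c*l') * cross_int M l' c' l c"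
proof -
  have "dof_int M l' c' - dof_int M l c = (\<integral>t. c'*t / (l' + c'*t) - c*t / (l + c*t) \<partial>M)"
    unfolding dof_int_def using assms by (intro Bochner_Integration.integral_diff[symmetric] integrable_dof)
  also have "\<dots> = (\<integral>t. (c'*l - c*l') * (t / ((l' + c'*t) * (l + c*t))) \<partial>M)"
  proof (rule integral_cong_on_interval)
    fix t assume "t \<in> {h1..h2}"
    then have "l + c*t \<noteq> 0" "l' + c'*t \<noteq> 0"
      using assms denom_pos[of t l c] denom_pos[of t l' c'] by auto
    then show "c'*t / (l' + c'*t) - c*t / (l + c*t) = (c'*l - c*l') * (t / ((l' + c'*t) * (l + c*t)))"
      by (simp add: field_simps)
  qed measurable
  also have "\<dots> = (c'*l - c*l') * cross_int M l' c' l c"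
    unfolding cross_int_def by (rule integral_mult_right_zero)
  finally show ?thesis .
qed

lemma dof_int_split:
  assumes "0 < l" "0 \<le> c"
  shows "dof_int M l c = c*l * cross_int M l c l c + c\<^sup>2 * square_int M l c"
proof -
  have "dof_int M l c
      = (\<integral>t. c*l * (t / ((l + c*t) * (l + c*t))) + c\<^sup>2 * (t / (l + c*t))\<^sup>2 \<partial>M)"
    unfolding dof_int_def
  proof (rule integral_cong_on_interval)
    fix t assume "t \<in> {h1..h2}"
    then have "l + c*t \<noteq> 0" using assms denom_pos[of t l c] by auto
    have "c*l * (t / ((l + c*t) * (l + c*t))) + c\<^sup>2 * (t / (l + c*t))\<^sup>2
        = c*t * (l + c*t) / ((l + c*t) * (l + c*t))"
      by (simp add: power2_eq_square add_divide_distrib[symmetric] algebra_simps)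
    then show "c*t / (l + c*t) = c*l * (t / ((l + c*t) * (l + c*t))) + c\<^sup>2 * (t / (l + c*t))\<^sup>2"
      using \<open>l + c*t \<noteq> 0\<close> by simp
  qed measurable
  also have "\<dots> = c*l * cross_int M l c l c + c\<^sup>2 * square_int M l c"
    unfolding cross_int_def square_int_def using assms
    by (simp add: integrable_cross integrable_square del: times_divide_eq_right)
  finally show ?thesis .
qed

lemma cross_int_bounds:
  assumes "0 < l" "0 \<le> c" "0 < l'" "0 \<le> c'"
  shows "0 \<le> cross_int M l' c' l c \<and> cross_int M l' c' l c \<le> h2 / (l'*l)"
proof -
  have "integral\<^sup>L M (\<lambda>t. 0) \<le> cross_int M l' c' l c"
       "cross_int M l' c' l c \<le> integral\<^sup>L M (\<lambda>t. h2 / (l'*l))"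
    unfolding cross_int_def using assms cross_term_bounds
    by (intro integral_mono_on_interval integrable_cross integrable_const_interval;
        force dest: pos_of_interval)+
  then show ?thesis unfolding integral_const_interval by simp
qed

lemma cross_int_diff_le:
  assumes "0 < l" "0 \<le> c" "0 < l'" "0 \<le> c'"
  shows "\<bar>cross_int M l' c' l c - cross_int M l c l c\<bar> \<le> h2 * (\<bar>l' - l\<bar> + h2 * \<bar>c' - c\<bar>) / (l'*l*l)"
proof -
  have "cross_int M l' c' l c - cross_int M l c l c
      = (\<integral>t. t / ((l' + c'*t) * (l + c*t)) - t / ((l + c*t) * (l + c*t)) \<partial>M)"
    unfolding cross_int_def using assms by (intro Bochner_Integration.integral_diff[symmetric] integrable_cross)
  also have "\<bar>\<dots>\<bar> \<le> h2 * (\<bar>l' - l\<bar> + h2 * \<bar>c' - c\<bar>) / (l'*l*l)"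
    using assms by (intro abs_integral_le_on_interval Bochner_Integration.integrable_diff integrable_cross cross_term_diff_le)
                   (auto dest: pos_of_interval)
  finally show ?thesis .
qed

lemma oracle_int_le:
  assumes "0 < l" "0 \<le> c" "0 < r" "0 < b" "0 < g"
  shows "r * oracle_int M b g r \<le> b*l\<^sup>2 * cross_int M l c l c + r*g*c\<^sup>2 * square_int M l c"
proof -
  have "r * oracle_int M b g r = (\<integral>t. r * (b*g*t / (b*t + r*g)) \<partial>M)"
    unfolding oracle_int_def by (rule integral_mult_right_zero[symmetric])
  also have "\<dots> \<le> (\<integral>t. b*l\<^sup>2 * (t / ((l + c*t) * (l + c*t))) + r*g*c\<^sup>2 * (t / (l + c*t))\<^sup>2 \<partial>M)"
  proof (rule integral_mono_on_interval)
    show "integrable M (\<lambda>t. r * (b*g*t / (b*t + r*g)))"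
      using assms by (intro integrable_mult_right integrable_oracle)
    show "integrable M (\<lambda>t. b*l\<^sup>2 * (t / ((l + c*t) * (l + c*t))) + r*g*c\<^sup>2 * (t / (l + c*t))\<^sup>2)"
      using assms
      by (intro Bochner_Integration.integrable_add integrable_mult_right integrable_cross integrable_square)
  qed (use assms oracle_term_le pos_of_interval in auto)
  also have "\<dots> = b*l\<^sup>2 * cross_int M l c l c + r*g*c\<^sup>2 * square_int M l c"
    unfolding cross_int_def square_int_def using assms
    by (simp add: integrable_cross integrable_square del: times_divide_eq_right)
  finally show ?thesis .
qed

lemma oracle_int_antimono:
  "0 < r \<Longrightarrow> r \<le> r' \<Longrightarrow> 0 < b \<Longrightarrow> 0 < g \<Longrightarrow> oracle_int M b g r' \<le> oracle_int M b g r"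
  unfolding oracle_int_def
  by (intro integral_mono_on_interval integrable_oracle oracle_term_antimono) (auto dest: pos_of_interval)

lemma oracle_int_at_inverse:
  assumes "0 < c" "0 < b" "0 < g"
  shows "oracle_int M b g (1/c) = c * g * ratio_int M (g/b) c"
proof -
  have "oracle_int M b g (1/c) = (\<integral>t. c * g * (t / (g/b + c*t)) \<partial>M)"
    unfolding oracle_int_def
  proof (rule integral_cong_on_interval)
    fix t assume "t \<in> {h1..h2}"
    then have "0 < t" by (auto intro: pos_of_interval)
    then show "b*g*t / (b*t + 1/c*g) = c * g * (t / (g/b + c*t))"
      using assms by (simp add: field_simps)
  qed measurable
  also have "\<dots> = c * g * ratio_int M (g/b) c"
    unfolding ratio_int_def by (rule integral_mult_right_zero)
  finally show ?thesis .
qed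

lemma integral_inverse_eq_ratio_int:
  assumes "0 < l" "0 < c"
  shows "(\<integral>t. inverse (l/t + c) \<partial>M) = ratio_int M l c"
  unfolding ratio_int_def
proof (rule integral_cong_on_interval)
  fix t assume "t \<in> {h1..h2}"
  then have "0 < t" by (auto intro: pos_of_interval)
  then show "inverse (l/t + c) = t / (l + c*t)"
    using assms by (simp add: field_simps)
qed measurable

end

section \<open>The scale c and the derivatives of f\<close>

locale ridge_groups =
  fixes K :: nat and gam alpha :: "nat \<Rightarrow> real" and H :: "nat \<Rightarrow> real measure" and h1 h2 :: real
  assumes K_pos: "1 \<le> K"
    and gam_pos: "\<And>g. g < K \<Longrightarrow> 0 < gam g"
    and alpha_pos: "\<And>g. g < K \<Longrightarrow> 0 < alpha g"
    and H_interval: "\<And>g. g < K \<Longrightarrow> interval_prob (H g) h1 h2"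
begin

abbreviation "\<gamma> \<equiv> gamma_tot K gam"

lemma gamma_tot_pos: "0 < \<gamma>"
  unfolding gamma_tot_def using K_pos gam_pos by (intro sum_pos) (auto simp: lessThan_empty_iff)

definition pos_reg :: "(nat \<Rightarrow> real) \<Rightarrow> bool" where
  "pos_reg lam \<longleftrightarrow> (\<forall>i<K. 0 < lam i)"

lemma pos_reg_upd: "pos_reg lam \<Longrightarrow> 0 < s \<Longrightarrow> pos_reg (lam(j := s))"
  unfolding pos_reg_def by auto

definition dof_sum :: "(nat \<Rightarrow> real) \<Rightarrow> real \<Rightarrow> real" where
  "dof_sum lam c = (\<Sum>i<K. gam i * dof_int (H i) (lam i) c)"

lemma dof_sum_eq: "dof_sum lam c = c * (\<Sum>i<K. gam i * ratio_int (H i) (lam i) c)"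
  unfolding dof_sum_def dof_int_eq_mult_ratio_int by (simp add: sum_distrib_left ac_simps)

lemma dof_sum_mono: "pos_reg lam \<Longrightarrow> 0 \<le> c \<Longrightarrow> c \<le> c' \<Longrightarrow> dof_sum lam c \<le> dof_sum lam c'"
  unfolding dof_sum_def pos_reg_def
  by (intro sum_mono mult_left_mono interval_prob.dof_int_mono[OF H_interval])
     (auto intro: less_imp_le gam_pos)

lemma dof_sum_nonneg: "pos_reg lam \<Longrightarrow> 0 \<le> c \<Longrightarrow> 0 \<le> dof_sum lam c"
  using dof_sum_mono[of lam 0 c] by (simp add: dof_sum_def)

lemma dof_sum_continuous: "pos_reg lam \<Longrightarrow> continuous_on {0..} (dof_sum lam)"
  unfolding dof_sum_def pos_reg_def
proof (intro continuous_intros lipschitz_on_continuous_on)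
  fix i assume "\<forall>i<K. 0 < lam i" "i \<in> {..<K}"
  then have i: "i < K" "0 < lam i" by auto
  interpret interval_prob "H i" h1 h2 using H_interval[OF i(1)] .
  show "(h2 / lam i)-lipschitz_on {0..} (dof_int (H i) (lam i))"
    using i h1_pos h1_le_h2 dof_int_lipschitz by (intro lipschitz_onI) (auto simp: dist_real_def)
qed

lemma ex1_dof_root: "pos_reg lam \<Longrightarrow> \<exists>!c. 0 < c \<and> 1 - c = dof_sum lam c"
proof -
  assume lam: "pos_reg lam"
  obtain c where c: "0 \<le> c" "c \<le> 1" "c + dof_sum lam c = 1"
  proof (atomize_elim, rule IVT')
    show "0 + dof_sum lam 0 \<le> 1" "1 \<le> 1 + dof_sum lam 1"
      using dof_sum_nonneg[OF lam] by (auto simp: dof_sum_def)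
    show "continuous_on {0..1} (\<lambda>c. c + dof_sum lam c)"
      using dof_sum_continuous[OF lam] by (intro continuous_intros) (auto elim: continuous_on_subset)
  qed simp
  moreover have "c \<noteq> 0" using c(3) by (auto simp: dof_sum_def)
  moreover have "c' = c" if "0 < c'" "1 - c' = dof_sum lam c'" for c'
    using dof_sum_mono[OF lam, of c c'] dof_sum_mono[OF lam, of c' c] c that by argo
  ultimately show ?thesis by (intro ex1I[of _ c]) auto
qed

definition croot :: "(nat \<Rightarrow> real) \<Rightarrow> real" where
  "croot lam = (THE c. 0 < c \<and> 1 - c = dof_sum lam c)"

lemma croot_is_root: "pos_reg lam \<Longrightarrow> 0 < croot lam \<and> 1 - croot lam = dof_sum lam (croot lam)"
  unfolding croot_def by (rule theI') (rule ex1_dof_root)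

lemma croot_unique: "pos_reg lam \<Longrightarrow> 0 < c \<Longrightarrow> 1 - c = dof_sum lam c \<Longrightarrow> croot lam = c"
  unfolding croot_def by (rule the1_equality[OF ex1_dof_root]) auto

lemma croot_le_one: "pos_reg lam \<Longrightarrow> croot lam \<le> 1"
  using croot_is_root dof_sum_nonneg by (metis diff_ge_0_iff_ge less_imp_le)

lemma fsol_equation_iff:
  assumes lam: "pos_reg lam" and x: "0 \<le> x"
  shows "x = (\<Sum>j<K. gam j / \<gamma> * (\<integral>t. inverse (lam j / t + 1 / (1 + \<gamma> * x)) \<partial>(H j)))
     \<longleftrightarrow> croot lam = 1 / (1 + \<gamma> * x)"
proof -
  define c where "c = 1 / (1 + \<gamma> * x)"
  have "0 < 1 + \<gamma> * x" using gamma_tot_pos x by (simp add: add_pos_nonneg)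
  then have c: "0 < c" "\<gamma> * x = (1 - c) / c" unfolding c_def by (auto simp: field_simps)
  have "(\<Sum>j<K. gam j / \<gamma> * (\<integral>t. inverse (lam j / t + c) \<partial>(H j)))
      = (\<Sum>j<K. gam j * ratio_int (H j) (lam j) c) / \<gamma>"
    unfolding sum_divide_distrib using lam c(1) interval_prob.integral_inverse_eq_ratio_int[OF H_interval]
    by (intro sum.cong) (auto simp: pos_reg_def)
  also have "\<dots> = dof_sum lam c / (c * \<gamma>)"
    unfolding dof_sum_eq using c(1) by simp
  finally have rhs: "(\<Sum>j<K. gam j / \<gamma> * (\<integral>t. inverse (lam j / t + c) \<partial>(H j)))
      = dof_sum lam c / (c * \<gamma>)" .
  have "x = (\<Sum>j<K. gam j / \<gamma> * (\<integral>t. inverse (lam j / t + c) \<partial>(H j)))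
      \<longleftrightarrow> \<gamma> * x = dof_sum lam c / c"
    unfolding rhs using gamma_tot_pos c(1) by (simp add: field_simps)
  also have "\<dots> \<longleftrightarrow> 1 - c = dof_sum lam c"
    unfolding c(2) using c(1) by (auto simp: divide_cancel_right)
  also have "\<dots> \<longleftrightarrow> croot lam = c"
    using croot_unique[OF lam c(1)] croot_is_root[OF lam] by auto
  finally show ?thesis unfolding c_def .
qed

lemma fsol_eq_croot:
  assumes lam: "pos_reg lam"
  shows "fsol K gam H lam = (1 / croot lam - 1) / \<gamma>"
  unfolding fsol_def
proof (rule the_equality)
  have "0 < croot lam" "croot lam \<le> 1"
    using croot_is_root[OF lam] croot_le_one[OF lam] by auto
  then have "croot lam = 1 / (1 + \<gamma> * ((1 / croot lam - 1) / \<gamma>))" "0 \<le> (1 / croot lam - 1) / \<gamma>"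
    using gamma_tot_pos by simp_all
  then show "0 \<le> (1 / croot lam - 1) / \<gamma> \<and> (1 / croot lam - 1) / \<gamma> = (\<Sum>j<K. gam j / \<gamma> *
      (\<integral>t. inverse (lam j / t + 1 / (1 + \<gamma> * ((1 / croot lam - 1) / \<gamma>))) \<partial>(H j)))"
    using fsol_equation_iff[OF lam] by blast
next
  fix x assume "0 \<le> x \<and> x = (\<Sum>j<K. gam j / \<gamma> * (\<integral>t. inverse (lam j / t + 1 / (1 + \<gamma> * x)) \<partial>(H j)))"
  then have "croot lam = 1 / (1 + \<gamma> * x)" using fsol_equation_iff[OF lam] by blast
  then show "x = (1 / croot lam - 1) / \<gamma>" using gamma_tot_pos by simp
qed

definition cross_at :: "(nat \<Rightarrow> real) \<Rightarrow> (nat \<Rightarrow> real) \<Rightarrow> nat \<Rightarrow> real" where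
  "cross_at lam' lam i = cross_int (H i) (lam' i) (croot lam') (lam i) (croot lam)"

lemma cross_at_bounds:
  assumes "pos_reg lam'" "pos_reg lam" "i < K"
  shows "0 \<le> cross_at lam' lam i \<and> cross_at lam' lam i \<le> h2 / (lam' i * lam i)"
  unfolding cross_at_def using assms croot_is_root
  by (intro interval_prob.cross_int_bounds[OF H_interval]) (auto simp: pos_reg_def less_imp_le)

lemma cross_at_sum_nonneg:
  "pos_reg lam' \<Longrightarrow> pos_reg lam \<Longrightarrow> 0 \<le> (\<Sum>i<K. gam i * lam i * cross_at lam' lam i)"
  using cross_at_bounds gam_pos by (intro sum_nonneg mult_nonneg_nonneg) (auto simp: pos_reg_def less_imp_le)

lemma croot_diff:
  assumes lam': "pos_reg lam'" and lam: "pos_reg lam"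
  shows "(croot lam' - croot lam) * (1 + (\<Sum>i<K. gam i * lam i * cross_at lam' lam i))
       = croot lam * (\<Sum>i<K. (lam' i - lam i) * (gam i * cross_at lam' lam i))"
proof -
  define c c' where "c = croot lam" and "c' = croot lam'"
  have "c - c' = dof_sum lam' c' - dof_sum lam c"
    using croot_is_root[OF lam] croot_is_root[OF lam'] unfolding c_def c'_def by linarith
  also have "\<dots> = (\<Sum>i<K. gam i * ((c'*lam i - c*lam' i) * cross_at lam' lam i))"
    unfolding dof_sum_def sum_subtractf[symmetric] right_diff_distrib[symmetric] cross_at_def c_def c'_def
    using lam lam' croot_is_root[OF lam] croot_is_root[OF lam']
    by (intro sum.cong refl arg_cong2[where f = "(*)"] interval_prob.dof_int_diff[OF H_interval])
       (auto simp: pos_reg_def)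
  also have "\<dots> = (c' - c) * (\<Sum>i<K. gam i * lam i * cross_at lam' lam i)
                 - c * (\<Sum>i<K. (lam' i - lam i) * (gam i * cross_at lam' lam i))"
    by (simp add: sum_distrib_left sum_subtractf[symmetric] algebra_simps)
  finally show ?thesis unfolding c_def c'_def by (simp add: algebra_simps)
qed

lemma croot_upd_diff:
  assumes lam: "pos_reg lam" and j: "j < K" and s: "0 < s"
  shows "(croot (lam(j := s)) - croot lam) * (1 + (\<Sum>i<K. gam i * lam i * cross_at (lam(j := s)) lam i))
       = (s - lam j) * (croot lam * gam j * cross_at (lam(j := s)) lam j)"
  using croot_diff[OF pos_reg_upd[OF lam s] lam] sum_fun_upd_diff[of "{..<K}" j lam s] j
  by simp

lemma croot_upd_tendsto:
  assumes lam: "pos_reg lam" and j: "j < K"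
  shows "((\<lambda>s. croot (lam(j := s))) \<longlongrightarrow> croot lam) (at (lam j))"
proof -
  have bound: "\<bar>croot (lam(j := s)) - croot lam\<bar> \<le> \<bar>s - lam j\<bar> * (gam j * h2 / (s * lam j))"
    if s: "0 < s" for s
  proof -
    let ?lam' = "lam(j := s)"
    have lam': "pos_reg ?lam'" using pos_reg_upd[OF lam s] .
    have X: "1 \<le> 1 + (\<Sum>i<K. gam i * lam i * cross_at ?lam' lam i)"
      using cross_at_sum_nonneg[OF lam' lam] by simp
    have I: "0 \<le> cross_at ?lam' lam j" "cross_at ?lam' lam j \<le> h2 / (s * lam j)"
      using cross_at_bounds[OF lam' lam j] by simp_all
    have "\<bar>croot ?lam' - croot lam\<bar>
        \<le> \<bar>(croot ?lam' - croot lam) * (1 + (\<Sum>i<K. gam i * lam i * cross_at ?lam' lam i))\<bar>"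
      using X by (simp add: abs_mult mult_le_cancel_left1)
    also have "\<dots> = \<bar>s - lam j\<bar> * (croot lam * gam j * cross_at ?lam' lam j)"
      unfolding croot_upd_diff[OF lam j s] using croot_is_root[OF lam] gam_pos[OF j] I
      by (simp add: abs_mult)
    also have "\<dots> \<le> \<bar>s - lam j\<bar> * (1 * gam j * (h2 / (s * lam j)))"
      using croot_is_root[OF lam] croot_le_one[OF lam] gam_pos[OF j] I
      by (intro mult_left_mono mult_mono) auto
    finally show ?thesis by simp
  qed
  have pos: "0 < lam j" using lam j by (simp add: pos_reg_def)
  have "((\<lambda>s. \<bar>s - lam j\<bar> * (gam j * h2 / (s * lam j)))
          \<longlongrightarrow> \<bar>lam j - lam j\<bar> * (gam j * h2 / (lam j * lam j))) (at (lam j))"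
    using pos by (intro tendsto_intros) auto
  then have lim: "((\<lambda>s. \<bar>s - lam j\<bar> * (gam j * h2 / (s * lam j))) \<longlongrightarrow> 0) (at (lam j))"
    by simp
  have "\<forall>\<^sub>F s in at (lam j).
      norm (croot (lam(j := s)) - croot lam) \<le> \<bar>s - lam j\<bar> * (gam j * h2 / (s * lam j))"
    using eventually_pos_at[OF pos] by eventually_elim (use bound in auto)
  then show ?thesis
    by (rule LIM_zero_cancel[OF Lim_null_comparison[OF _ lim]])
qed

lemma cross_at_upd_tendsto:
  assumes lam: "pos_reg lam" and j: "j < K" and i: "i < K"
  shows "((\<lambda>s. cross_at (lam(j := s)) lam i) \<longlongrightarrow> cross_at lam lam i) (at (lam j))"
proof -
  define bnd where "bnd s = h2 * (\<bar>(lam(j := s)) i - lam i\<bar> + h2 * \<bar>croot (lam(j := s)) - croot lam\<bar>)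
      / ((lam(j := s)) i * lam i * lam i)" for s
  have pos: "0 < lam j" "0 < lam i" using lam i j by (simp_all add: pos_reg_def)
  have "\<forall>\<^sub>F s in at (lam j). norm (cross_at (lam(j := s)) lam i - cross_at lam lam i) \<le> bnd s"
    using eventually_pos_at[OF pos(1)]
  proof eventually_elim
    case (elim s)
    have lam': "pos_reg (lam(j := s))" using pos_reg_upd[OF lam elim] .
    have "0 < (lam(j := s)) i" "0 \<le> croot (lam(j := s))" "0 \<le> croot lam"
      using lam' i croot_is_root[OF lam'] croot_is_root[OF lam] unfolding pos_reg_def by auto
    then show ?case
      unfolding cross_at_def bnd_def real_norm_def
      by (intro interval_prob.cross_int_diff_le[OF H_interval[OF i]] pos(2))
  qed
  moreover have "(bnd \<longlongrightarrow> h2 * (\<bar>lam i - lam i\<bar> + h2 * \<bar>croot lam - croot lam\<bar>) / (lam i * lam i * lam i))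
      (at (lam j))"
    unfolding bnd_def using pos
    by (intro tendsto_intros fun_upd_tendsto[of lam j i] croot_upd_tendsto[OF lam j]) auto
  then have "(bnd \<longlongrightarrow> 0) (at (lam j))" by simp
  ultimately show ?thesis
    by (rule LIM_zero_cancel[OF Lim_null_comparison])
qed

text \<open>\<open>c_slope lam\<close> is the derivative of \<open>c + dof_sum lam c\<close> in \<open>c\<close> at \<open>c = croot lam\<close>
  (the \<open>E\<close> of the header, with \<open>A\<^sub>i = cross_at lam lam i\<close>).\<close>
definition c_slope :: "(nat \<Rightarrow> real) \<Rightarrow> real" where
  "c_slope lam = 1 + (\<Sum>i<K. gam i * lam i * cross_at lam lam i)"

lemma c_slope_ge_one: "pos_reg lam \<Longrightarrow> 1 \<le> c_slope lam"
  unfolding c_slope_def using cross_at_sum_nonneg by simp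

lemma croot_upd_has_derivative:
  assumes lam: "pos_reg lam" and j: "j < K"
  shows "((\<lambda>s. croot (lam(j := s))) has_real_derivative
           croot lam * gam j * cross_at lam lam j / c_slope lam) (at (lam j))"
  unfolding has_field_derivative_iff
proof (rule Lim_transform_eventually)
  define X where "X s = 1 + (\<Sum>i<K. gam i * lam i * cross_at (lam(j := s)) lam i)" for s
  show "((\<lambda>s. croot lam * gam j * cross_at (lam(j := s)) lam j / X s)
          \<longlongrightarrow> croot lam * gam j * cross_at lam lam j / c_slope lam) (at (lam j))"
    unfolding X_def c_slope_def using c_slope_ge_one[OF lam, unfolded c_slope_def] j
    by (intro tendsto_intros cross_at_upd_tendsto[OF lam j]) auto
  have pos: "0 < lam j" using lam j by (simp add: pos_reg_def)
  show "\<forall>\<^sub>F s in at (lam j). croot lam * gam j * cross_at (lam(j := s)) lam j / X s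
          = (croot (lam(j := s)) - croot (lam(j := lam j))) / (s - lam j)"
    using eventually_pos_at[OF pos] eventually_neq_at_within[of "lam j" "lam j" UNIV]
  proof eventually_elim
    case (elim s)
    then have "1 \<le> X s" "s - lam j \<noteq> 0"
      using cross_at_sum_nonneg[OF pos_reg_upd[OF lam] lam] unfolding X_def by auto
    then show ?case
      using croot_upd_diff[OF lam j, of s, folded X_def] elim by (simp add: field_simps)
  qed
qed

lemma deriv_fsol_upd:
  assumes lam: "pos_reg lam" and j: "j < K"
  shows "deriv (\<lambda>s. fsol K gam H (lam(j := s))) (lam j)
       = - gam j * cross_at lam lam j / (\<gamma> * croot lam * c_slope lam)"
proof -
  have c: "0 < croot lam" "1 \<le> c_slope lam"
    using croot_is_root[OF lam] c_slope_ge_one[OF lam] by auto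
  have "((\<lambda>s. (1 / croot (lam(j := s)) - 1) / \<gamma>) has_real_derivative
          - (croot lam * gam j * cross_at lam lam j / c_slope lam) / (croot lam * croot lam) / \<gamma>)
        (at (lam j))"
    using croot_upd_has_derivative[OF lam j] c gamma_tot_pos by (auto intro!: derivative_eq_intros)
  then have "((\<lambda>s. fsol K gam H (lam(j := s))) has_real_derivative
          - (croot lam * gam j * cross_at lam lam j / c_slope lam) / (croot lam * croot lam) / \<gamma>)
        (at (lam j))"
    by (rule has_field_derivative_transform_within_open[where S = "{0<..}"])
       (use lam j in \<open>auto simp: fsol_eq_croot pos_reg_upd pos_reg_def\<close>)
  then show ?thesis
    using c gamma_tot_pos by (auto dest!: DERIV_imp_deriv simp: field_simps)
qed

section \<open>The limiting risk\<close>

lemma alpha_sq_pos: "g < K \<Longrightarrow> 0 < (alpha g)\<^sup>2"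
  by (metis alpha_pos zero_less_power)

lemma Rlim_eq:
  assumes lam: "pos_reg lam"
  shows "Rlim K gam alpha H lam
       = (1 + (\<Sum>j<K. (alpha j)\<^sup>2 * (lam j)\<^sup>2 * cross_at lam lam j)) / (croot lam * c_slope lam)"
proof -
  define c E where "c = croot lam" and "E = c_slope lam"
  have c: "0 < c" and E: "1 \<le> E"
    using croot_is_root[OF lam] c_slope_ge_one[OF lam] unfolding c_def E_def by auto
  have correction: "\<gamma> / gam j * (gam j * lam j - (alpha j)\<^sup>2 * (lam j)\<^sup>2)
        * deriv (\<lambda>s. fsol K gam H (lam(j := s))) (lam j)
      = ((alpha j)\<^sup>2 * (lam j)\<^sup>2 * cross_at lam lam j - gam j * lam j * cross_at lam lam j) / (c * E)"
    if j: "j < K" for j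
    unfolding deriv_fsol_upd[OF lam j] c_def[symmetric] E_def[symmetric]
    using gam_pos[OF j] gamma_tot_pos c E by (simp add: field_simps power2_eq_square)
  have "Rlim K gam alpha H lam = 1 / c
      + (\<Sum>j<K. ((alpha j)\<^sup>2 * (lam j)\<^sup>2 * cross_at lam lam j - gam j * lam j * cross_at lam lam j) / (c * E))"
    unfolding Rlim_def fsol_eq_croot[OF lam] c_def[symmetric] using gamma_tot_pos correction by simp
  also have "\<dots> = 1 / c + ((\<Sum>j<K. (alpha j)\<^sup>2 * (lam j)\<^sup>2 * cross_at lam lam j) - (E - 1)) / (c * E)"
    unfolding E_def c_slope_def by (simp add: sum_divide_distrib[symmetric] sum_subtractf)
  also have "\<dots> = (1 + (\<Sum>j<K. (alpha j)\<^sup>2 * (lam j)\<^sup>2 * cross_at lam lam j)) / (c * E)"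
    using c E by (simp add: field_simps)
  finally show ?thesis unfolding c_def E_def .
qed

lemma croot_mult_c_slope:
  assumes lam: "pos_reg lam"
  shows "croot lam * c_slope lam
       = 1 - (croot lam)\<^sup>2 * (\<Sum>i<K. gam i * square_int (H i) (lam i) (croot lam))"
proof -
  define c where "c = croot lam"
  have c: "0 < c" "1 - c = dof_sum lam c" using croot_is_root[OF lam] unfolding c_def by auto
  have "dof_sum lam c
      = (\<Sum>i<K. gam i * (c * lam i * cross_at lam lam i + c\<^sup>2 * square_int (H i) (lam i) c))"
    unfolding dof_sum_def cross_at_def c_def[symmetric] using lam c(1)
    by (intro sum.cong refl arg_cong2[where f = "(*)"] interval_prob.dof_int_split[OF H_interval])
       (auto simp: pos_reg_def)
  also have "\<dots> = c * (\<Sum>i<K. gam i * lam i * cross_at lam lam i)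
                 + c\<^sup>2 * (\<Sum>i<K. gam i * square_int (H i) (lam i) c)"
    by (simp add: sum.distrib sum_distrib_left algebra_simps)
  finally show ?thesis using c(2) unfolding c_slope_def c_def[symmetric] by (simp add: algebra_simps)
qed

definition oracle_sum :: "real \<Rightarrow> real" where
  "oracle_sum r = (\<Sum>j<K. oracle_int (H j) ((alpha j)\<^sup>2) (gam j) r)"

lemma oracle_sum_antimono: "0 < r \<Longrightarrow> r \<le> r' \<Longrightarrow> oracle_sum r' \<le> oracle_sum r"
  unfolding oracle_sum_def
  by (intro sum_mono interval_prob.oracle_int_antimono[OF H_interval] alpha_sq_pos gam_pos) auto

lemma Rlim_ge:
  assumes lam: "pos_reg lam"
  defines "r \<equiv> Rlim K gam alpha H lam"
  shows "0 < r \<and> 1 + r * oracle_sum r \<le> r"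
proof -
  define c num where "c = croot lam"
    and "num = 1 + (\<Sum>j<K. (alpha j)\<^sup>2 * (lam j)\<^sup>2 * cross_at lam lam j)"
  have c: "0 < c" and E: "1 \<le> c_slope lam"
    using croot_is_root[OF lam] c_slope_ge_one[OF lam] unfolding c_def by auto
  have "0 \<le> (\<Sum>j<K. (alpha j)\<^sup>2 * (lam j)\<^sup>2 * cross_at lam lam j)"
    using cross_at_bounds[OF lam lam] by (intro sum_nonneg) simp
  then have num: "1 \<le> num" unfolding num_def by simp
  have r_eq: "r = num / (c * c_slope lam)"
    unfolding r_def num_def c_def by (rule Rlim_eq[OF lam])
  have r: "0 < r" unfolding r_eq using num c E by simp
  have "r * (c * c_slope lam) = num"
    unfolding r_eq using c E by simp
  then have "r * (1 - c\<^sup>2 * (\<Sum>i<K. gam i * square_int (H i) (lam i) c)) = num"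
    unfolding croot_mult_c_slope[OF lam, folded c_def] .
  then have "r = num + r * c\<^sup>2 * (\<Sum>i<K. gam i * square_int (H i) (lam i) c)"
    by (simp add: algebra_simps)
  also have "\<dots> = 1 + (\<Sum>j<K. (alpha j)\<^sup>2 * (lam j)\<^sup>2 * cross_at lam lam j
                          + r * gam j * c\<^sup>2 * square_int (H j) (lam j) c)"
    unfolding num_def by (simp add: sum.distrib sum_distrib_left ac_simps)
  also have "\<dots> \<ge> 1 + (\<Sum>j<K. r * oracle_int (H j) ((alpha j)\<^sup>2) (gam j) r)"
  proof (intro add_left_mono sum_mono)
    fix j assume "j \<in> {..<K}"
    then have j: "j < K" by simp
    have "0 < lam j" using lam j by (simp add: pos_reg_def)
    then show "r * oracle_int (H j) ((alpha j)\<^sup>2) (gam j) r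
        \<le> (alpha j)\<^sup>2 * (lam j)\<^sup>2 * cross_at lam lam j + r * gam j * c\<^sup>2 * square_int (H j) (lam j) c"
      unfolding cross_at_def c_def[symmetric] using c r alpha_sq_pos[OF j] gam_pos[OF j]
      by (intro interval_prob.oracle_int_le[OF H_interval[OF j]]) auto
  qed
  finally show ?thesis using r by (simp add: oracle_sum_def sum_distrib_left)
qed

abbreviation lam_opt :: "nat \<Rightarrow> real" where
  "lam_opt \<equiv> \<lambda>g. gam g / (alpha g)\<^sup>2"

lemma pos_reg_lam_opt: "pos_reg lam_opt"
  unfolding pos_reg_def by (auto intro!: divide_pos_pos gam_pos alpha_sq_pos)

lemma Rlim_lam_opt: "Rlim K gam alpha H lam_opt = 1 + \<gamma> * fsol K gam H lam_opt"
proof -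
  have "gam j * lam_opt j - (alpha j)\<^sup>2 * (lam_opt j)\<^sup>2 = 0" if "j < K" for j
    using alpha_pos[OF that] by (simp add: power2_eq_square)
  then show ?thesis unfolding Rlim_def by simp
qed

lemma Rlim_lam_opt_fixed_point:
  defines "r \<equiv> Rlim K gam alpha H lam_opt"
  shows "0 < r \<and> r = 1 + r * oracle_sum r"
proof -
  define c where "c = croot lam_opt"
  have c: "0 < c" "1 - c = dof_sum lam_opt c"
    using croot_is_root[OF pos_reg_lam_opt] unfolding c_def by auto
  have r: "r = 1 / c"
    unfolding r_def Rlim_lam_opt fsol_eq_croot[OF pos_reg_lam_opt] c_def[symmetric]
    using gamma_tot_pos by simp
  have "r * oracle_sum r = (\<Sum>j<K. gam j * ratio_int (H j) (lam_opt j) c)"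
    unfolding oracle_sum_def r sum_distrib_left
  proof (intro sum.cong refl)
    fix j assume "j \<in> {..<K}"
    then have j: "j < K" by simp
    show "1 / c * oracle_int (H j) ((alpha j)\<^sup>2) (gam j) (1 / c) = gam j * ratio_int (H j) (lam_opt j) c"
      unfolding interval_prob.oracle_int_at_inverse[OF H_interval[OF j] c(1) alpha_sq_pos[OF j] gam_pos[OF j]]
      using c(1) by simp
  qed
  also have "\<dots> = dof_sum lam_opt c / c"
    unfolding dof_sum_eq using c(1) by simp
  also have "\<dots> = r - 1"
    unfolding c(2)[symmetric] r using c(1) by (simp add: diff_divide_distrib)
  finally show ?thesis using r c(1) by simp
qed

lemma Rlim_lam_opt_le:
  assumes "pos_reg lam"
  shows "Rlim K gam alpha H lam_opt \<le> Rlim K gam alpha H lam"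
proof -
  note ge = Rlim_ge[OF assms] and opt = Rlim_lam_opt_fixed_point
  show ?thesis
    by (rule le_of_fixed_point[where P = oracle_sum, OF oracle_sum_antimono ge[THEN conjunct1] ge[THEN conjunct2]
                                  opt[THEN conjunct1] opt[THEN conjunct2]])
qed

end

theorem corollary1:
  fixes K :: nat and gam alpha :: "nat \<Rightarrow> real" and H :: "nat \<Rightarrow> real measure"
    and h1 h2 :: real
  assumes "K \<ge> 1"
    and "\<forall>g<K. gam g > 0"
    and "\<forall>g<K. alpha g > 0"
    and "0 < h1" and "h1 \<le> h2"
    and "\<forall>g<K. prob_space (H g)"
    and "\<forall>g<K. sets (H g) = sets borel"
    and "\<forall>g<K. measure (H g) {h1..h2} = 1"
  shows "(\<forall>lam. (\<forall>g<K. lam g > 0) \<longrightarrow>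
            Rlim K gam alpha H (\<lambda>g. gam g / (alpha g)^2) \<le> Rlim K gam alpha H lam)
         \<and> Rlim K gam alpha H (\<lambda>g. gam g / (alpha g)^2)
             = 1 + gamma_tot K gam * fsol K gam H (\<lambda>g. gam g / (alpha g)^2)"
proof -
  interpret ridge_groups K gam alpha H h1 h2
    using assms by (intro ridge_groups.intro interval_prob.intro) auto
  show ?thesis
    using Rlim_lam_opt_le Rlim_lam_opt unfolding pos_reg_def by simp
qed

end
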